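(* Let $X$ be a non-negative absolutely continuous random variable with CDF $F$ and PDF $f$ (the common distribution of the identically distributed component lifetimes of a coherent system), and let $T$ be the system lifetime, with CDF $F_T(x)=q(F(x))$ and PDF $f_T(x)=q'(F(x))f(x)$, where $q$ is the distortion function of the system. Let $0<\alpha<\infty$, $\alpha\ne1$, $\beta>0$, and put $\psi_\alpha(u)=f_T^\alpha(F_T^{-1}(u))$ and $\phi_\alpha(u)=f^\alpha(F^{-1}(u))$ for $0\le u\le1$. If $\psi_\alpha(q(u))\ge \phi_\alpha(u)$ for all $0\le u\le 1$, then $R^\alpha_\beta(T)\ge R^\alpha_\beta(X)$ for $\{\alpha>1,\beta\le1\}$ or $\{0<\alpha<1,\beta\ge1\}$, and $R^\alpha_\beta(T)\le R^\alpha_\beta(X)$ for $\{\alpha>1,\beta\ge1\}$ or $\{0<\alpha<1,\beta\le1\}$. If instead $\psi_\alpha(q(u))\le \phi_\alpha(u)$ for all $0\le u\le1$, then all these inequalities between $R^\alpha_\beta(T)$ and $R^\alpha_\beta(X)$ are reversed.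
   Context: For a non-negative absolutely continuous random variable $Z$ with PDF $h$, the Rényi information generating function is $R^\alpha_\beta(Z)=\frac{1}{1-\alpha}\left(\int_0^\infty h^\alpha(x)\,dx\right)^{\beta-1}$; all integrals are assumed finite. A distortion function is a continuous increasing (differentiable) function $q:[0,1]\to[0,1]$ with $q(0)=0$, $q(1)=1$; it depends on the structure of the system and the copula of the component lifetimes. Quantile functions are $F^{-1}(u)=\inf\{x:F(x)\ge u\}$. *)

theory Defs
  imports "HOL-Probability.Probability"
begin

definition quantile :: "(real \<Rightarrow> real) \<Rightarrow> real \<Rightarrow> real" where
  "quantile G u = Inf {x. u \<le> G x}"

definition renyi_igf :: "real \<Rightarrow> real \<Rightarrow> (real \<Rightarrow> real) \<Rightarrow> real" where
  "renyi_igf \<alpha> \<beta> h = (1 / (1 - \<alpha>)) * (LBINT x:{0..}. h x powr \<alpha>) powr (\<beta> - 1)"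

end

theory Submission
  imports Defs
begin

text \<open>
  Since \<open>f\<^sub>T = (q' \<circ> F) f\<close>, the hypothesis at \<open>u = F x\<close> compares \<open>f\<^sub>T x\<close> with \<open>f x\<close>
  pointwise: for almost every \<open>x\<close> with \<open>f x > 0\<close> we have \<open>F\<^sup>-\<^sup>1 (F x) = x\<close>, and
  \<open>F\<^sub>T\<^sup>-\<^sup>1 (q (F x)) = x\<close> unless \<open>q\<close> is constant on an interval ending at \<open>F x\<close>, where \<open>q'\<close>
  vanishes and the comparison becomes trivial. Integrating, \<open>\<integral> f\<^sup>\<alpha>\<close> and \<open>\<integral> f\<^sub>T\<^sup>\<alpha>\<close> are
  ordered, and the sign of \<open>1/(1 - \<alpha>)\<close> together with the monotonicity of \<open>t \<mapsto> t\<^sup>\<beta>\<^sup>-\<^sup>1\<close>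
  gives the four inequalities.
\<close>

lemma distributed_real_distribution:
  assumes "prob_space M" and "distributed M lborel Y g"
  shows "real_distribution (density lborel g)"
proof -
  have "prob_space (distr M lborel Y)"
    using prob_space.prob_space_distr[OF assms(1) distributed_measurable[OF assms(2)]] .
  then show ?thesis
    using assms(2) by (simp add: distributed_distr_eq_density real_distribution_def real_distribution_axioms_def)
qed

lemma distributed_cdf:
  assumes "distributed M lborel Y g"
  shows "cdf (density lborel g) x = measure M {\<omega> \<in> space M. Y \<omega> \<le> x}"
proof -
  have "cdf (density lborel g) x = measure (distr M lborel Y) {..x}"
    using assms by (simp add: distributed_distr_eq_density cdf_def)
  also have "\<dots> = measure M (Y -` {..x} \<inter> space M)"
    using distributed_measurable[OF assms] by (intro measure_distr) auto
  finally show ?thesis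
    by (simp add: vimage_def Int_def conj_commute)
qed

lemma continuous_cdf_density:
  assumes "real_distribution (density lborel g)" and g: "g \<in> borel_measurable lborel"
  shows "continuous_on UNIV (cdf (density lborel g))"
proof -
  interpret real_distribution "density lborel g" by fact
  have "emeasure (density lborel g) {x} = 0" for x
    using AE_lborel_singleton[of x] g
    by (subst emeasure_density) (auto intro!: nn_integral_0_iff_AE[THEN iffD2] elim!: AE_mp)
  then show ?thesis
    by (auto simp: continuous_on_eq_continuous_at isCont_cdf measure_def)
qed

lemma cdf_zero_if_AE_nonneg:
  assumes "real_distribution N" and "continuous_on UNIV (cdf N)" and "AE x in N. 0 \<le> x"
  shows "cdf N 0 = 0"
proof -
  interpret real_distribution N by fact
  have "{..<0} \<subseteq> {x. cdf N x = 0}"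
    using assms(3) by (auto simp: cdf_def prob_eq_0 elim!: AE_mp)
  moreover have "closed {x. cdf N x = 0}"
    using assms(2) by (intro closed_Collect_eq continuous_on_const) auto
  ultimately have "closure {..<0::real} \<subseteq> {x. cdf N x = 0}"
    by (rule closure_minimal)
  then show ?thesis by auto
qed

lemma set_integral_powr_density_pos:
  fixes g :: "real \<Rightarrow> real"
  assumes "real_distribution (density lborel (\<lambda>x. ennreal (g x)))"
    and g: "(\<lambda>x. ennreal (g x)) \<in> borel_measurable lborel"
    and cdf0: "cdf (density lborel (\<lambda>x. ennreal (g x))) 0 = 0"
    and int: "set_integrable lborel {0..} (\<lambda>x. g x powr \<alpha>)"
  shows "0 < (LBINT x:{0..}. g x powr \<alpha>)"
proof -
  let ?N = "density lborel (\<lambda>x. ennreal (g x))"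
  interpret real_distribution ?N by fact
  have "prob {0<..} = 1"
    using prob_compl[of "{..0}"] cdf0 by (simp add: cdf_def Compl_eq_Diff_UNIV[symmetric])
  moreover have "prob {0<..} \<le> prob {0..}"
    by (rule finite_measure_mono) auto
  ultimately have "emeasure ?N {0..} \<noteq> 0"
    by (simp add: emeasure_eq_measure)
  then have "\<not> (AE x in lborel. indicator {0..} x *\<^sub>R g x powr \<alpha> = 0)"
  proof (rule contrapos_nn)
    assume "AE x in lborel. indicator {0..} x *\<^sub>R g x powr \<alpha> = 0"
    then have "AE x in lborel. ennreal (g x) * indicator {0..} x = 0"
      by eventually_elim (auto simp: indicator_def)
    then show "emeasure ?N {0..} = 0"
      using g by (simp add: emeasure_density nn_integral_0_iff_AE)
  qed
  moreover have "0 \<le> (LBINT x:{0..}. g x powr \<alpha>)"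
    unfolding set_lebesgue_integral_def by (intro integral_nonneg_AE) (simp add: indicator_def)
  moreover have "(LBINT x:{0..}. g x powr \<alpha>) = 0 \<longleftrightarrow>
      (AE x in lborel. indicator {0..} x *\<^sub>R g x powr \<alpha> = 0)"
    unfolding set_lebesgue_integral_def using int
    by (intro integral_nonneg_eq_0_iff_AE) (auto simp: set_integrable_def)
  ultimately show ?thesis
    by linarith
qed

lemma bdd_below_superlevel_set:
  fixes G :: "real \<Rightarrow> real"
  assumes "(G \<longlongrightarrow> 0) at_bot" and "0 < u"
  shows "bdd_below {x. u \<le> G x}"
proof -
  obtain N where "\<And>x. x \<le> N \<Longrightarrow> G x < u"
    using order_tendstoD(2)[OF assms] by (auto simp: eventually_at_bot_linorder)
  then have "N \<le> x" if "u \<le> G x" for x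
    using that by (meson linorder_not_le nle_le)
  then show ?thesis
    by (auto simp: bdd_below_def)
qed

lemma quantile_le:
  assumes "(G \<longlongrightarrow> 0) at_bot" and "0 < u" and "u \<le> G x"
  shows "quantile G u \<le> x"
  unfolding quantile_def using bdd_below_superlevel_set[OF assms(1,2)] assms(3)
  by (intro cInf_lower) auto

text \<open>Both sides are the junk value \<open>Inf (UNIV :: real set)\<close>.\<close>
lemma quantile_eq_quantile_zero:
  assumes "\<And>x. 0 \<le> G x" and "\<And>x. 0 \<le> H x"
  shows "quantile G 0 = quantile H 0"
  using assms by (simp add: quantile_def)

lemma quantile_right_inverse:
  fixes G :: "real \<Rightarrow> real"
  assumes cont: "continuous_on UNIV G" and lim: "(G \<longlongrightarrow> 0) at_bot"
    and "0 < u" and "u \<le> G x"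
  shows "G (quantile G u) = u"
proof (rule antisym)
  let ?S = "{x. u \<le> G x}" and ?z = "quantile G u"
  have "closed ?S"
    using closed_Collect_le[OF continuous_on_const cont] .
  then have "?z \<in> ?S"
    unfolding quantile_def using assms(4) bdd_below_superlevel_set[OF lim assms(3)]
    by (intro closed_contains_Inf) auto
  then show "u \<le> G ?z" by simp
  show "G ?z \<le> u"
  proof (rule ccontr)
    assume "\<not> G ?z \<le> u"
    then have "\<forall>\<^sub>F y in at_left ?z. u < G y"
      using cont by (intro order_tendstoD(1)) (auto simp: continuous_on_def intro: tendsto_within_subset)
    then obtain y where "y < ?z" "u < G y"
      by (auto simp: eventually_at_left_field dest: dense)
    then show False
      using quantile_le[OF lim assms(3), of y] by simp
  qed
qed

lemma (in real_distribution) greaterThan_null_if_cdf_eq_1: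
  assumes "cdf M r = 1"
  shows "{r<..} \<in> null_sets M"
proof -
  have "prob {r<..} = 0"
    using prob_compl[of "{..r}"] assms by (simp add: cdf_def Compl_eq_Diff_UNIV[symmetric])
  then show ?thesis
    by (simp add: emeasure_eq_measure null_setsI)
qed

lemma (in real_distribution) AE_cdf_not_flat_from:
  assumes cont: "continuous_on UNIV (cdf M)"
  shows "AE x in M. \<not> (r < x \<and> cdf M x = cdf M r)"
proof -
  let ?S = "{x. r < x \<and> cdf M x = cdf M r}"
  have "\<exists>b. ?S \<subseteq> b \<and> b \<in> null_sets M"
  proof (cases "bdd_above ?S")
    case True
    show ?thesis
    proof (cases "?S = {}")
      case False
      let ?s = "Sup ?S"
      have "closure ?S \<subseteq> {x. cdf M x = cdf M r}"
        using cont by (intro closure_minimal closed_Collect_eq continuous_on_const) auto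
      then have "cdf M ?s = cdf M r"
        using closure_contains_Sup[OF False True] by auto
      moreover have "r < ?s"
      proof -
        obtain x where "x \<in> ?S"
          using False by auto
        then show ?thesis
          using cSup_upper[OF _ True, of x] by auto
      qed
      ultimately have "{r<..?s} \<in> null_sets M"
        using cdf_diff_eq[of r ?s] by (simp add: emeasure_eq_measure null_setsI)
      moreover have "?S \<subseteq> {r<..?s}"
        using True by (auto intro: cSup_upper)
      ultimately show ?thesis by blast
    qed auto
  next
    case False
    have "\<forall>\<^sub>F y in at_top. cdf M y \<le> cdf M r"
    proof (rule eventuallyI)
      fix y
      obtain x where "x \<in> ?S" "y < x"
        using False unfolding bdd_above_def by (meson linorder_not_le)
      then show "cdf M y \<le> cdf M r"
        using cdf_nondecreasing[of y x] by auto
    qed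
    then have "1 \<le> cdf M r"
      by (intro tendsto_upperbound[OF cdf_lim_at_top_prob]) auto
    then have "{r<..} \<in> null_sets M"
      using cdf_bounded_prob[of r] by (intro greaterThan_null_if_cdf_eq_1) simp
    then show ?thesis
      by auto
  qed
  then show ?thesis
    by (auto intro: AE_I')
qed

lemma (in real_distribution) AE_quantile_cdf:
  assumes cont: "continuous_on UNIV (cdf M)"
  shows "AE x in M. quantile (cdf M) (cdf M x) = x"
proof -
  have "AE x in M. \<forall>r::rat. \<not> (of_rat r < x \<and> cdf M x = cdf M (of_rat r))"
    unfolding AE_all_countable using AE_cdf_not_flat_from[OF cont] by blast
  then show ?thesis
  proof eventually_elim
    case (elim x)
    have not_flat: "cdf M r \<noteq> cdf M x" if "r \<in> \<rat>" "r < x" for r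
      using elim that by (metis Rats_cases)
    obtain r where r: "r \<in> \<rat>" "x - 1 < r" "r < x"
      using Rats_dense_in_real[of "x - 1" x] by auto
    have "0 < cdf M x"
      using cdf_nonneg[of r] cdf_nondecreasing[of r x] not_flat[OF r(1,3)] r by linarith
    note quantile = quantile_right_inverse[OF cont cdf_lim_at_bot this order_refl]
      quantile_le[OF cdf_lim_at_bot this order_refl]
    show ?case
    proof (rule ccontr)
      assume "quantile (cdf M) (cdf M x) \<noteq> x"
      then obtain r where "r \<in> \<rat>" "quantile (cdf M) (cdf M x) < r" "r < x"
        using quantile(2) Rats_dense_in_real[of "quantile (cdf M) (cdf M x)" x] by auto
      then show False
        using not_flat cdf_nondecreasing[of "quantile (cdf M) (cdf M x)" r] cdf_nondecreasing[of r x]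
          quantile(1) by fastforce
    qed
  qed
qed

lemma renyi_igf_mono:
  assumes pos: "0 < (LBINT x:{0..}. g x powr \<alpha>)"
    and le: "(LBINT x:{0..}. g x powr \<alpha>) \<le> (LBINT x:{0..}. h x powr \<alpha>)"
    and sign: "0 \<le> (1 - \<alpha>) * (\<beta> - 1)"
  shows "renyi_igf \<alpha> \<beta> g \<le> renyi_igf \<alpha> \<beta> h"
proof -
  let ?A = "LBINT x:{0..}. g x powr \<alpha>" and ?B = "LBINT x:{0..}. h x powr \<alpha>"
  from sign consider "\<alpha> \<le> 1" "1 \<le> \<beta>" | "1 \<le> \<alpha>" "\<beta> \<le> 1"
    by (auto simp: zero_le_mult_iff)
  then have "(1 / (1 - \<alpha>)) * ?A powr (\<beta> - 1) \<le> (1 / (1 - \<alpha>)) * ?B powr (\<beta> - 1)"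
  proof cases
    case 1
    then show ?thesis
      using pos le by (intro mult_left_mono powr_mono2) auto
  next
    case 2
    then show ?thesis
      using pos le by (intro mult_left_mono_neg powr_mono2') auto
  qed
  then show ?thesis
    by (simp add: renyi_igf_def)
qed

lemma renyi_igf_antimono:
  assumes pos: "0 < (LBINT x:{0..}. g x powr \<alpha>)"
    and le: "(LBINT x:{0..}. g x powr \<alpha>) \<le> (LBINT x:{0..}. h x powr \<alpha>)"
    and sign: "(1 - \<alpha>) * (\<beta> - 1) \<le> 0"
  shows "renyi_igf \<alpha> \<beta> h \<le> renyi_igf \<alpha> \<beta> g"
proof -
  let ?A = "LBINT x:{0..}. g x powr \<alpha>" and ?B = "LBINT x:{0..}. h x powr \<alpha>"
  from sign consider "\<alpha> \<le> 1" "\<beta> \<le> 1" | "1 \<le> \<alpha>" "1 \<le> \<beta>"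
    by (auto simp: mult_le_0_iff)
  then have "(1 / (1 - \<alpha>)) * ?B powr (\<beta> - 1) \<le> (1 / (1 - \<alpha>)) * ?A powr (\<beta> - 1)"
  proof cases
    case 1
    then show ?thesis
      using pos le by (intro mult_left_mono powr_mono2') auto
  next
    case 2
    then show ?thesis
      using pos le by (intro mult_left_mono_neg powr_mono2) auto
  qed
  then show ?thesis
    by (simp add: renyi_igf_def)
qed

lemma at_within_Icc_neq_bot:
  fixes x :: real
  assumes "a < b" and "x \<in> {a..b}"
  shows "at x within {a..b} \<noteq> bot"
proof -
  consider "x = a" | "x = b" | "a < x" "x < b"
    using assms(2) by fastforce
  then show ?thesis
    by cases (use assms(1) in \<open>simp_all add: at_within_Icc_at_right at_within_Icc_at_left at_within_Icc_at\<close>)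
qed

locale distortion_function =
  fixes q q' :: "real \<Rightarrow> real"
  assumes mono: "mono_on {0..1} q"
    and zero: "q 0 = 0" and one: "q 1 = 1"
    and deriv: "\<And>u. u \<in> {0..1} \<Longrightarrow> (q has_real_derivative q' u) (at u within {0..1})"
begin

lemma range: "u \<in> {0..1} \<Longrightarrow> q u \<in> {0..1}"
  using mono_onD[OF mono, of 0 u] mono_onD[OF mono, of u 1] zero one by auto

lemma continuous: "continuous_on {0..1} q"
  using deriv by (rule DERIV_continuous_on)

lemma deriv_nonneg:
  assumes u: "u \<in> {0..1}"
  shows "0 \<le> q' u"
proof (rule tendsto_lowerbound)
  show "((\<lambda>y. (q y - q u) / (y - u)) \<longlongrightarrow> q' u) (at u within {0..1})"
    using deriv[OF u] by (simp add: has_field_derivative_iff)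
  show "\<forall>\<^sub>F y in at u within {0..1}. 0 \<le> (q y - q u) / (y - u)"
    unfolding eventually_at_filter
  proof (rule always_eventually, intro allI impI)
    fix y assume "y \<noteq> u" "y \<in> {0..1}"
    then show "0 \<le> (q y - q u) / (y - u)"
      using u mono_onD[OF mono, of u y] mono_onD[OF mono, of y u]
      by (cases "u < y") (auto simp: divide_nonpos_neg zero_le_divide_iff)
  qed
qed (rule at_within_Icc_neq_bot[OF _ u], simp)

lemma deriv_eq_0_if_constant:
  assumes "c < d" and "{c..d} \<subseteq> {0..1}" and u: "u \<in> {c..d}"
    and const: "\<And>w. w \<in> {c..d} \<Longrightarrow> q w = q u"
  shows "q' u = 0"
proof (rule has_field_derivative_unique)
  show "(q has_real_derivative q' u) (at u within {c..d})"
    using assms(2,3) by (intro has_field_derivative_subset[OF deriv]) auto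
  show "(q has_real_derivative 0) (at u within {c..d})"
  proof (rule has_field_derivative_transform_within[OF DERIV_const[of "q u"] zero_less_one u])
    fix w assume "w \<in> {c..d}"
    then show "q u = q w"
      using const by simp
  qed
  show "at u within {c..d} \<noteq> bot"
    using assms(1,3) by (rule at_within_Icc_neq_bot)
qed

lemma one_le_deriv:
  assumes "0 \<le> b" and "b < 1" and dominates: "\<And>v. b < v \<Longrightarrow> v < 1 \<Longrightarrow> v - b \<le> q v - q b"
  shows "1 \<le> q' b"
proof (rule tendsto_lowerbound)
  have "(q has_real_derivative q' b) (at b within {b..1})"
    using assms(1,2) by (intro has_field_derivative_subset[OF deriv]) auto
  then show "((\<lambda>y. (q y - q b) / (y - b)) \<longlongrightarrow> q' b) (at_right b)"
    using at_within_Icc_at_right[OF assms(2)] by (simp add: has_field_derivative_iff)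
  show "\<forall>\<^sub>F y in at_right b. 1 \<le> (q y - q b) / (y - b)"
    unfolding eventually_at_right_field
  proof (intro exI[of _ 1] conjI allI impI)
    fix y assume "b < y" "y < 1"
    then show "1 \<le> (q y - q b) / (y - b)"
      using dominates[of y] by simp
  qed (use assms(2) in simp)
qed simp

end

locale distorted_distribution = distortion_function q q' for q q' :: "real \<Rightarrow> real" +
  fixes f F :: "real \<Rightarrow> real"
  assumes f_nonneg: "\<And>x. 0 \<le> f x"
    and f_borel: "(\<lambda>x. ennreal (f x)) \<in> borel_measurable lborel"
    and fT_borel: "(\<lambda>x. ennreal (q' (F x) * f x)) \<in> borel_measurable lborel"
    and real_distribution_X: "real_distribution (density lborel (\<lambda>x. ennreal (f x)))"
    and real_distribution_T: "real_distribution (density lborel (\<lambda>x. ennreal (q' (F x) * f x)))"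
    and F_eq_cdf: "F = cdf (density lborel (\<lambda>x. ennreal (f x)))"
    and cdf_T_eq: "cdf (density lborel (\<lambda>x. ennreal (q' (F x) * f x))) = (\<lambda>x. q (F x))"
begin

abbreviation fT :: "real \<Rightarrow> real" where "fT x \<equiv> q' (F x) * f x"
abbreviation FT :: "real \<Rightarrow> real" where "FT x \<equiv> q (F x)"
abbreviation \<phi> :: "real \<Rightarrow> real \<Rightarrow> real" where "\<phi> \<alpha> u \<equiv> f (quantile F u) powr \<alpha>"
abbreviation \<psi> :: "real \<Rightarrow> real \<Rightarrow> real" where "\<psi> \<alpha> u \<equiv> fT (quantile FT u) powr \<alpha>"

sublocale X: real_distribution "density lborel (\<lambda>x. ennreal (f x))"
  by (rule real_distribution_X)

sublocale T: real_distribution "density lborel (\<lambda>x. ennreal (fT x))"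
  by (rule real_distribution_T)

lemma F_continuous: "continuous_on UNIV F"
  using continuous_cdf_density[OF real_distribution_X f_borel] by (simp add: F_eq_cdf)

lemma FT_continuous: "continuous_on UNIV FT"
  using continuous_cdf_density[OF real_distribution_T fT_borel] by (simp add: cdf_T_eq)

lemma F_mono: "mono F"
  by (simp add: F_eq_cdf monoI X.cdf_nondecreasing)

lemma F_range: "F x \<in> {0..1}"
  by (simp add: F_eq_cdf X.cdf_nonneg X.cdf_bounded_prob)

lemma F_at_bot: "(F \<longlongrightarrow> 0) at_bot"
  using X.cdf_lim_at_bot by (simp add: F_eq_cdf)

lemma F_at_top: "(F \<longlongrightarrow> 1) at_top"
  using X.cdf_lim_at_top_prob by (simp add: F_eq_cdf)

lemma FT_at_bot: "(FT \<longlongrightarrow> 0) at_bot"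
  using T.cdf_lim_at_bot by (simp add: cdf_T_eq)

lemma fT_nonneg: "0 \<le> fT x"
  using deriv_nonneg[OF F_range] f_nonneg by simp

lemma AE_quantile_F: "AE x in lborel. 0 < f x \<longrightarrow> quantile F (F x) = x"
proof -
  have "AE x in density lborel (\<lambda>x. ennreal (f x)). quantile F (F x) = x"
    using X.AE_quantile_cdf F_continuous by (simp add: F_eq_cdf)
  then show ?thesis
    using f_borel by (simp add: AE_density)
qed

lemma quantile_FT_zero: "quantile FT (q 0) = quantile F 0"
  unfolding zero using F_range range[OF F_range] by (intro quantile_eq_quantile_zero) auto

lemma quantile_FT_cases:
  assumes x: "quantile F (F x) = x" and pos: "0 < q (F x)"
  obtains "quantile FT (q (F x)) = x"
    | "q' (F (quantile FT (q (F x)))) = 0" and "q' (F x) = 0"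
proof (cases "quantile FT (q (F x)) = x")
  case False
  let ?z = "quantile FT (q (F x))"
  have "F x \<noteq> 0"
    using pos zero by auto
  then have "0 < F x"
    using F_range[of x] by simp
  have "?z < x"
    using quantile_le[OF FT_at_bot pos order_refl] False by simp
  then have "F ?z \<le> F x"
    using F_mono by (simp add: monoD)
  moreover have "F ?z \<noteq> F x"
  proof
    assume "F ?z = F x"
    then have "quantile F (F x) \<le> ?z"
      using quantile_le[OF F_at_bot \<open>0 < F x\<close>, of ?z] by simp
    then show False
      using x \<open>?z < x\<close> by simp
  qed
  ultimately have "F ?z < F x" by simp
  have q_z: "q (F ?z) = q (F x)"
    using quantile_right_inverse[OF FT_continuous FT_at_bot pos order_refl] .
  have sub: "{F ?z..F x} \<subseteq> {0..1}"
    using F_range[of ?z] F_range[of x] by simp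
  have const: "q w = q (F x)" if w: "w \<in> {F ?z..F x}" for w
  proof (rule antisym)
    show "q w \<le> q (F x)"
      using w sub by (intro mono_onD[OF mono]) auto
    have "q (F ?z) \<le> q w"
      using w sub by (intro mono_onD[OF mono]) auto
    then show "q (F x) \<le> q w"
      using q_z by simp
  qed
  show ?thesis
  proof (rule that(2))
    show "q' (F ?z) = 0"
    proof (rule deriv_eq_0_if_constant[OF \<open>F ?z < F x\<close> sub])
      show "q w = q (F ?z)" if "w \<in> {F ?z..F x}" for w
        unfolding q_z using that by (rule const)
    qed (use \<open>F ?z < F x\<close> in simp)
    show "q' (F x) = 0"
      by (rule deriv_eq_0_if_constant[OF \<open>F ?z < F x\<close> sub _ const]) (use \<open>F ?z < F x\<close> in simp)
  qed
qed (rule that(1))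

lemma powr_density_le_distorted:
  assumes ge: "\<forall>u\<in>{0..1}. \<phi> \<alpha> u \<le> \<psi> \<alpha> (q u)"
    and x: "quantile F (F x) = x" and "0 < f x" and "F x = 0 \<or> 0 < q (F x)"
  shows "f x powr \<alpha> \<le> fT x powr \<alpha>"
proof -
  have hyp: "f x powr \<alpha> \<le> fT (quantile FT (q (F x))) powr \<alpha>"
    using ge F_range[of x] x by force
  from assms(4) show ?thesis
  proof
    assume "F x = 0"
    then show ?thesis
      using hyp x quantile_FT_zero by simp
  next
    assume pos: "0 < q (F x)"
    show ?thesis
    proof (cases rule: quantile_FT_cases[OF x pos])
      case 1
      then show ?thesis
        using hyp by simp
    next
      case 2
      then show ?thesis
        using hyp \<open>0 < f x\<close> by simp
    qed
  qed
qed

lemma powr_distorted_le_density: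
  assumes le: "\<forall>u\<in>{0..1}. \<psi> \<alpha> (q u) \<le> \<phi> \<alpha> u"
    and x: "quantile F (F x) = x"
  shows "fT x powr \<alpha> \<le> f x powr \<alpha>"
proof -
  have hyp: "fT (quantile FT (q (F x))) powr \<alpha> \<le> f x powr \<alpha>"
    using le F_range[of x] x by force
  consider "F x = 0" | "0 < q (F x)" | "0 < F x" "q (F x) = 0"
    using F_range[of x] range[OF F_range, of x] by fastforce
  then show ?thesis
  proof cases
    case 1
    then show ?thesis
      using hyp x quantile_FT_zero by simp
  next
    case 2
    then show ?thesis
      by (cases rule: quantile_FT_cases[OF x]) (use hyp in simp_all)
  next
    case 3
    have "q w = q (F x)" if "w \<in> {0..F x}" for w
      using that F_range[of x] range[of w] mono_onD[OF mono, of w "F x"] 3 by auto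
    then have "q' (F x) = 0"
      using 3 F_range[of x] by (intro deriv_eq_0_if_constant[of 0 "F x"]) auto
    then show ?thesis
      by simp
  qed
qed

lemma F_quantile:
  assumes "0 < v" and "v < 1"
  shows "F (quantile F v) = v"
proof -
  obtain x where "v \<le> F x"
    using order_tendstoD(1)[OF F_at_top \<open>v < 1\<close>]
    by (meson eventually_at_top_linorder less_imp_le order_refl)
  then show ?thesis
    using quantile_right_inverse[OF F_continuous F_at_bot \<open>0 < v\<close>] by blast
qed

lemma AE_density_le_distorted_above_quantile:
  assumes ge: "\<forall>u\<in>{0..1}. \<phi> \<alpha> u \<le> \<psi> \<alpha> (q u)" and "0 < \<alpha>"
    and "0 < v" and "v < 1" and pos: "\<And>w. v < w \<Longrightarrow> w \<le> 1 \<Longrightarrow> 0 < q w"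
  shows "AE x in lborel. quantile F v < x \<longrightarrow> f x \<le> fT x"
  using AE_quantile_F
proof eventually_elim
  case (elim x)
  show ?case
  proof (intro impI)
    assume "quantile F v < x"
    show "f x \<le> fT x"
    proof (cases "0 < f x")
      case True
      then have x: "quantile F (F x) = x"
        using elim by simp
      have "v \<le> F x"
        using monoD[OF F_mono, of "quantile F v" x] \<open>quantile F v < x\<close> F_quantile[OF \<open>0 < v\<close> \<open>v < 1\<close>]
        by simp
      moreover have "F x \<noteq> v"
        using x \<open>quantile F v < x\<close> by auto
      ultimately have "0 < q (F x)"
        using pos F_range[of x] by simp
      then have "f x powr \<alpha> \<le> fT x powr \<alpha>"
        using powr_density_le_distorted[OF ge x] True by simp
      then show ?thesis
        using powr_less_mono2[OF \<open>0 < \<alpha>\<close> fT_nonneg] by (meson not_le)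
    next
      case False
      then show ?thesis
        using f_nonneg[of x] fT_nonneg[of x] by simp
    qed
  qed
qed

lemma increment_le_distorted_increment:
  assumes ge: "\<forall>u\<in>{0..1}. \<phi> \<alpha> u \<le> \<psi> \<alpha> (q u)" and "0 < \<alpha>"
    and "0 < v'" and "v' < v" and "v < 1"
    and pos: "\<And>w. v' < w \<Longrightarrow> w \<le> 1 \<Longrightarrow> 0 < q w"
  shows "v - v' \<le> q v - q v'"
proof -
  define a b where "a = quantile F v'" and "b = quantile F v"
  have F_a: "F a = v'" and F_b: "F b = v"
    unfolding a_def b_def using assms(3-5) by (simp_all add: F_quantile)
  have "a < b"
  proof (rule ccontr)
    assume "\<not> a < b"
    then have "F b \<le> F a"
      by (intro monoD[OF F_mono]) simp
    then show False
      using F_a F_b \<open>v' < v\<close> by simp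
  qed
  have "AE x in lborel. a < x \<longrightarrow> f x \<le> fT x"
    unfolding a_def using assms(4,5) pos
    by (intro AE_density_le_distorted_above_quantile[OF ge \<open>0 < \<alpha>\<close> \<open>0 < v'\<close>]) simp_all
  then have "AE x in lborel. ennreal (f x) * indicator {a<..b} x \<le> ennreal (fT x) * indicator {a<..b} x"
    by eventually_elim (auto simp: indicator_def ennreal_leI)
  then have "emeasure (density lborel (\<lambda>x. ennreal (f x))) {a<..b}
      \<le> emeasure (density lborel (\<lambda>x. ennreal (fT x))) {a<..b}"
    using f_borel fT_borel by (simp add: emeasure_density nn_integral_mono_AE)
  moreover have "emeasure (density lborel (\<lambda>x. ennreal (f x))) {a<..b} = v - v'"
    using X.cdf_diff_eq[OF \<open>a < b\<close>] by (simp add: X.emeasure_eq_measure F_eq_cdf[symmetric] F_a F_b)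
  moreover have "emeasure (density lborel (\<lambda>x. ennreal (fT x))) {a<..b} = q v - q v'"
    using T.cdf_diff_eq[OF \<open>a < b\<close>] by (simp add: T.emeasure_eq_measure cdf_T_eq F_a F_b)
  ultimately show ?thesis
    using mono_onD[OF mono, of v' v] \<open>0 < v'\<close> \<open>v' < v\<close> \<open>v < 1\<close> by simp
qed

text \<open>
  If \<open>q\<close> vanished on some \<open>[0, b]\<close> with \<open>b > 0\<close> maximal, then \<open>q' b = 0\<close>; but to the right
  of \<open>F\<^sup>-\<^sup>1 b\<close> the hypothesis gives \<open>f \<le> f\<^sub>T\<close>, so \<open>q\<close> grows at least like the identity
  after \<open>b\<close> and \<open>q' b \<ge> 1\<close>.
\<close>
lemma distortion_pos:
  assumes ge: "\<forall>u\<in>{0..1}. \<phi> \<alpha> u \<le> \<psi> \<alpha> (q u)" and "0 < \<alpha>" and u: "0 < u" "u \<le> 1"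
  shows "0 < q u"
proof (rule ccontr)
  assume "\<not> 0 < q u"
  then have "q u = 0"
    using range[of u] u by simp
  define Z where "Z = {w \<in> {0..1}. q w = 0}"
  define b where "b = Sup Z"
  have "closed Z"
    unfolding Z_def using continuous by (rule continuous_closed_preimage_constant) simp
  moreover have "u \<in> Z" and "bdd_above Z"
    using u \<open>q u = 0\<close> by (auto simp: Z_def bdd_above_def)
  ultimately have "b \<in> Z" and "u \<le> b"
    unfolding b_def by (auto intro: closed_contains_Sup[of Z] cSup_upper[of u Z])
  then have "q b = 0" and "0 < b" and "b < 1"
    using u one by (auto simp: Z_def less_le)
  have pos: "0 < q w" if "b < w" "w \<le> 1" for w
  proof -
    have "w \<notin> Z"
      using that cSup_upper[OF _ \<open>bdd_above Z\<close>, of w] by (auto simp: b_def)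
    then show ?thesis
      using that range[of w] \<open>0 < b\<close> by (auto simp: Z_def less_le)
  qed
  have "1 \<le> q' b"
  proof (rule one_le_deriv)
    fix v assume "b < v" "v < 1"
    then show "v - b \<le> q v - q b"
      using increment_le_distorted_increment[OF ge \<open>0 < \<alpha>\<close> \<open>0 < b\<close>] pos by simp
  qed (use \<open>0 < b\<close> \<open>b < 1\<close> in simp_all)
  moreover have "q' b = 0"
  proof (rule deriv_eq_0_if_constant[of 0 b])
    fix w assume "w \<in> {0..b}"
    then show "q w = q b"
      using range[of w] mono_onD[OF mono, of w b] \<open>q b = 0\<close> \<open>b < 1\<close> by auto
  qed (use \<open>0 < b\<close> \<open>b < 1\<close> in auto)
  ultimately show False
    by simp
qed

lemma AE_powr_density_le_distorted:
  assumes ge: "\<forall>u\<in>{0..1}. \<phi> \<alpha> u \<le> \<psi> \<alpha> (q u)" and "0 < \<alpha>"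
  shows "AE x in lborel. f x powr \<alpha> \<le> fT x powr \<alpha>"
  using AE_quantile_F
proof eventually_elim
  case (elim x)
  show ?case
  proof (cases "0 < f x")
    case True
    have "F x = 0 \<or> 0 < q (F x)"
      using distortion_pos[OF ge \<open>0 < \<alpha>\<close>, of "F x"] F_range[of x] by force
    then show ?thesis
      using powr_density_le_distorted[OF ge] elim True by simp
  next
    case False
    then show ?thesis
      using f_nonneg[of x] by simp
  qed
qed

lemma AE_powr_distorted_le_density:
  assumes le: "\<forall>u\<in>{0..1}. \<psi> \<alpha> (q u) \<le> \<phi> \<alpha> u"
  shows "AE x in lborel. fT x powr \<alpha> \<le> f x powr \<alpha>"
  using AE_quantile_F
proof eventually_elim
  case (elim x)
  show ?case
  proof (cases "0 < f x")
    case True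
    then show ?thesis
      using powr_distorted_le_density[OF le] elim by simp
  next
    case False
    then show ?thesis
      using f_nonneg[of x] by simp
  qed
qed


lemma set_integral_powr_pos:
  assumes "AE x in density lborel (\<lambda>x. ennreal (f x)). 0 \<le> x"
    and "set_integrable lborel {0..} (\<lambda>x. f x powr \<alpha>)"
    and "set_integrable lborel {0..} (\<lambda>x. fT x powr \<alpha>)"
  shows "0 < (LBINT x:{0..}. f x powr \<alpha>)" and "0 < (LBINT x:{0..}. fT x powr \<alpha>)"
proof -
  have "F 0 = 0"
    using cdf_zero_if_AE_nonneg[OF real_distribution_X] F_continuous assms(1) by (simp add: F_eq_cdf)
  then show "0 < (LBINT x:{0..}. f x powr \<alpha>)"
    using set_integral_powr_density_pos[OF real_distribution_X f_borel _ assms(2)] by (simp add: F_eq_cdf)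
  show "0 < (LBINT x:{0..}. fT x powr \<alpha>)"
    using set_integral_powr_density_pos[OF real_distribution_T fT_borel _ assms(3)] \<open>F 0 = 0\<close>
    by (simp add: cdf_T_eq zero)
qed

lemma set_integral_powr_density_le_distorted:
  assumes "\<forall>u\<in>{0..1}. \<phi> \<alpha> u \<le> \<psi> \<alpha> (q u)" and "0 < \<alpha>"
    and "set_integrable lborel {0..} (\<lambda>x. f x powr \<alpha>)"
    and "set_integrable lborel {0..} (\<lambda>x. fT x powr \<alpha>)"
  shows "(LBINT x:{0..}. f x powr \<alpha>) \<le> (LBINT x:{0..}. fT x powr \<alpha>)"
  using AE_powr_density_le_distorted[OF assms(1,2)]
  by (intro set_integral_mono_AE[OF assms(3,4)]) (auto elim: AE_mp)

lemma set_integral_powr_distorted_le_density: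
  assumes "\<forall>u\<in>{0..1}. \<psi> \<alpha> (q u) \<le> \<phi> \<alpha> u"
    and "set_integrable lborel {0..} (\<lambda>x. f x powr \<alpha>)"
    and "set_integrable lborel {0..} (\<lambda>x. fT x powr \<alpha>)"
  shows "(LBINT x:{0..}. fT x powr \<alpha>) \<le> (LBINT x:{0..}. f x powr \<alpha>)"
  using AE_powr_distorted_le_density[OF assms(1)]
  by (intro set_integral_mono_AE[OF assms(3,2)]) (auto elim: AE_mp)

end

lemma distorted_distributionI:
  assumes "distortion_function q q'" and M: "prob_space M"
    and X: "distributed M lborel X (\<lambda>x. ennreal (f x))" and "\<And>x. 0 \<le> f x"
    and F: "\<And>x. F x = measure M {\<omega> \<in> space M. X \<omega> \<le> x}"
    and T: "distributed M lborel T (\<lambda>x. ennreal (q' (F x) * f x))"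
    and FT: "\<And>x. measure M {\<omega> \<in> space M. T \<omega> \<le> x} = q (F x)"
  shows "distorted_distribution q q' f F"
proof -
  have "F = cdf (density lborel (\<lambda>x. ennreal (f x)))"
    using F by (simp add: fun_eq_iff distributed_cdf[OF X])
  moreover have "cdf (density lborel (\<lambda>x. ennreal (q' (F x) * f x))) = (\<lambda>x. q (F x))"
    using FT by (simp add: fun_eq_iff distributed_cdf[OF T])
  ultimately show ?thesis
    unfolding distorted_distribution_def distorted_distribution_axioms_def
    using assms(1,4) distributed_real_distribution[OF M X] distributed_real_distribution[OF M T]
      distributed_borel_measurable[OF X] distributed_borel_measurable[OF T]
    by blast
qed

theorem proposition6p1:
  fixes M :: "'a measure" and X T :: "'a \<Rightarrow> real"
    and f F fT FT q q' :: "real \<Rightarrow> real" and \<alpha> \<beta> :: real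
  assumes M: "prob_space M"
    and X_distr: "distributed M lborel X (\<lambda>x. ennreal (f x))"
    and f_nonneg: "\<forall>x. 0 \<le> f x"
    and X_nonneg: "AE \<omega> in M. 0 \<le> X \<omega>"
    and F_cdf: "\<forall>x. F x = measure M {\<omega> \<in> space M. X \<omega> \<le> x}"
    and q_range: "q ` {0..1} \<subseteq> {0..1}"
    and q_cont: "continuous_on {0..1} q"
    and q_mono: "mono_on {0..1} q"
    and q0: "q 0 = 0" and q1: "q 1 = 1"
    and q_deriv: "\<forall>u\<in>{0..1}. (q has_real_derivative q' u) (at u within {0..1})"
    and FT_def: "FT = (\<lambda>x. q (F x))"
    and fT_def: "fT = (\<lambda>x. q' (F x) * f x)"
    and T_distr: "distributed M lborel T (\<lambda>x. ennreal (fT x))"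
    and T_cdf: "\<forall>x. measure M {\<omega> \<in> space M. T \<omega> \<le> x} = FT x"
    and \<alpha>_pos: "0 < \<alpha>" and \<alpha>_ne1: "\<alpha> \<noteq> 1" and \<beta>_pos: "0 < \<beta>"
    and int_f: "set_integrable lborel {0..} (\<lambda>x. f x powr \<alpha>)"
    and int_fT: "set_integrable lborel {0..} (\<lambda>x. fT x powr \<alpha>)"
  shows
    "((\<forall>u\<in>{0..1}. fT (quantile FT (q u)) powr \<alpha> \<ge> f (quantile F u) powr \<alpha>) \<longrightarrow>
        ((((\<alpha> > 1 \<and> \<beta> \<le> 1) \<or> (\<alpha> < 1 \<and> \<beta> \<ge> 1)) \<longrightarrow> renyi_igf \<alpha> \<beta> fT \<ge> renyi_igf \<alpha> \<beta> f) \<and>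
         (((\<alpha> > 1 \<and> \<beta> \<ge> 1) \<or> (\<alpha> < 1 \<and> \<beta> \<le> 1)) \<longrightarrow> renyi_igf \<alpha> \<beta> fT \<le> renyi_igf \<alpha> \<beta> f)))
     \<and>
     ((\<forall>u\<in>{0..1}. fT (quantile FT (q u)) powr \<alpha> \<le> f (quantile F u) powr \<alpha>) \<longrightarrow>
        ((((\<alpha> > 1 \<and> \<beta> \<le> 1) \<or> (\<alpha> < 1 \<and> \<beta> \<ge> 1)) \<longrightarrow> renyi_igf \<alpha> \<beta> fT \<le> renyi_igf \<alpha> \<beta> f) \<and>
         (((\<alpha> > 1 \<and> \<beta> \<ge> 1) \<or> (\<alpha> < 1 \<and> \<beta> \<le> 1)) \<longrightarrow> renyi_igf \<alpha> \<beta> fT \<ge> renyi_igf \<alpha> \<beta> f)))"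
proof -
  \<comment> \<open>\<open>q_range\<close> and \<open>q_cont\<close> follow from the other hypotheses on \<open>q\<close>.\<close>
  have "distortion_function q q'"
    using q_mono q0 q1 q_deriv by unfold_locales auto
  then interpret distorted_distribution q q' f F
    by (rule distorted_distributionI[OF _ M X_distr f_nonneg[rule_format] F_cdf[rule_format]
          T_distr[unfolded fT_def]]) (use T_cdf in \<open>simp add: FT_def\<close>)
  have "AE x in distr M lborel X. 0 \<le> x"
    using X_nonneg distributed_measurable[OF X_distr] by (subst AE_distr_iff) auto
  then have nonneg: "AE x in density lborel (\<lambda>x. ennreal (f x)). 0 \<le> x"
    unfolding distributed_distr_eq_density[OF X_distr] .
  note int_fT' = int_fT[unfolded fT_def]
  have pos_X: "0 < (LBINT x:{0..}. f x powr \<alpha>)" and pos_T: "0 < (LBINT x:{0..}. fT x powr \<alpha>)"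
    using set_integral_powr_pos[OF nonneg int_f int_fT'] by (simp_all add: fT_def)
  have X_le_T: "(LBINT x:{0..}. f x powr \<alpha>) \<le> (LBINT x:{0..}. fT x powr \<alpha>)"
    if "\<forall>u\<in>{0..1}. fT (quantile FT (q u)) powr \<alpha> \<ge> f (quantile F u) powr \<alpha>"
    using set_integral_powr_density_le_distorted[OF _ \<alpha>_pos int_f int_fT'] that
    by (simp add: fT_def FT_def)
  have T_le_X: "(LBINT x:{0..}. fT x powr \<alpha>) \<le> (LBINT x:{0..}. f x powr \<alpha>)"
    if "\<forall>u\<in>{0..1}. fT (quantile FT (q u)) powr \<alpha> \<le> f (quantile F u) powr \<alpha>"
    using set_integral_powr_distorted_le_density[OF _ int_f int_fT'] that
    by (simp add: fT_def FT_def)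
  have "0 \<le> (1 - \<alpha>) * (\<beta> - 1)" if "(\<alpha> > 1 \<and> \<beta> \<le> 1) \<or> (\<alpha> < 1 \<and> \<beta> \<ge> 1)"
    using that by (auto simp: zero_le_mult_iff)
  moreover have "(1 - \<alpha>) * (\<beta> - 1) \<le> 0" if "(\<alpha> > 1 \<and> \<beta> \<ge> 1) \<or> (\<alpha> < 1 \<and> \<beta> \<le> 1)"
    using that by (auto simp: mult_le_0_iff)
  ultimately show ?thesis
    using renyi_igf_mono[OF pos_X X_le_T] renyi_igf_antimono[OF pos_X X_le_T]
      renyi_igf_mono[OF pos_T T_le_X] renyi_igf_antimono[OF pos_T T_le_X]
    by blast
qed

end
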